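(* Let $\sigma$ be a rank-one ruled submanifold whose ruling distribution has degree one at every $t\in I$, and suppose $\rho_{t}X_{m-1}(t)\neq0$ for all $t\in I$. Let $\beta$ be the striction hypersurface of $\sigma$, as defined below. Then every point of the striction hypersurface is a singular point of $\sigma$. That is, $\sigma$ is singular at $(t,u^{1},\dotsc,u^{m-2},f(t,u^{1},\dotsc,u^{m-2}))$ for all $(t,u^{1},\dotsc,u^{m-2})\in I\times\mathbb{R}^{m-2}$; equivalently, $\frac{\partial\beta}{\partial t}\wedge X_{1}\wedge\dotsb\wedge X_{m-1}=0$ everywhere on $I\times\mathbb{R}^{m-2}$.
   Context: Ruled submanifold: given an open interval $I$, a smooth unit-speed curve $\gamma\colon I\to\mathbb{R}^{m+n}$ and smooth vector fields $X_{1},\dotsc,X_{m-1}$ along $\gamma$ that are orthonormal at each $t$, define $\sigma(t,u^{1},\dotsc,u^{m-1})=\gamma(t)+\sum_{j=1}^{m-1}u^{j}X_{j}(t)$ on $I\times\mathbb{R}^{m-1}$. A point is regular if $d\sigma$ is injective there and singular otherwise. Let $\mathcal{D}_{t}=\operatorname{Span}(X_{j}(t))_{j=1}^{m-1}$ and $\rho_{t}X_{j}(t)=\pi^{\perp}\dot X_{j}(t)$, where $\pi^{\perp}$ is orthogonal projection onto $\mathcal{D}_{t}^{\perp}$. The degree of $\mathcal{D}$ at $t$ is the rank of the linear map $\sum_jc_jX_j(t)\mapsto\sum_jc_j\rho_tX_j(t)$. A ruled submanifold is rank-one if at every regular point the kernel of its second fundamental form has dimension $m-1$. Striction hypersurface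 (the case $d=1$): define $$f(t,u^{1},\dotsc,u^{m-2})=-\frac{\langle\dot\gamma(t),\rho_{t}X_{m-1}(t)\rangle+\sum_{i=1}^{m-2}u^{i}\langle\dot X_{i}(t),\rho_{t}X_{m-1}(t)\rangle}{|\rho_{t}X_{m-1}(t)|^{2}}$$ and $$\beta(t,u^{1},\dotsc,u^{m-2})=\gamma(t)+\sum_{i=1}^{m-2}u^{i}X_{i}(t)+f(t,u^{1},\dotsc,u^{m-2})X_{m-1}(t).$$ This $\beta$ is the unique map of this form satisfying $\langle\partial\beta/\partial t,\rho_{t}X_{m-1}\rangle=0$. *)

theory Defs
  imports "HOL-Analysis.Analysis"
begin

definition vd :: "(real \<Rightarrow> 'a::real_normed_vector) \<Rightarrow> real \<Rightarrow> 'a" where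
  "vd f t = vector_derivative f (at t)"

definition smooth_curve_on :: "real set \<Rightarrow> (real \<Rightarrow> 'a::real_normed_vector) \<Rightarrow> bool" where
  "smooth_curve_on I f \<longleftrightarrow>
     (\<exists>D :: nat \<Rightarrow> real \<Rightarrow> 'a. D 0 = f \<and>
        (\<forall>k. \<forall>t\<in>I. (D k has_vector_derivative D (Suc k) t) (at t)))"

text \<open>The ruled map sigma(t,u) = gamma(t) + sum_{j=1}^{m-1} u^j X_j(t);
  parameters u are functions nat => real, only entries 1..m-1 matter.\<close>
definition ruled_sigma ::
  "(real \<Rightarrow> 'a::euclidean_space) \<Rightarrow> (nat \<Rightarrow> real \<Rightarrow> 'a) \<Rightarrow> nat \<Rightarrow> real \<Rightarrow> (nat \<Rightarrow> real) \<Rightarrow> 'a" where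
  "ruled_sigma \<gamma> X m t u = \<gamma> t + (\<Sum>j\<in>{1..m-1}. u j *\<^sub>R X j t)"

text \<open>Parameter space R x R^(m-1) (tangent vectors of the domain).\<close>
definition params :: "nat \<Rightarrow> (real \<times> (nat \<Rightarrow> real)) set" where
  "params m = {(a, c). \<forall>j. j \<notin> {1..m-1} \<longrightarrow> c j = 0}"

definition dsigma ::
  "(real \<Rightarrow> 'a::euclidean_space) \<Rightarrow> (nat \<Rightarrow> real \<Rightarrow> 'a) \<Rightarrow> nat \<Rightarrow> real \<Rightarrow> (nat \<Rightarrow> real)
    \<Rightarrow> real \<times> (nat \<Rightarrow> real) \<Rightarrow> 'a" where
  "dsigma \<gamma> X m t u p =
     fst p *\<^sub>R (vd \<gamma> t + (\<Sum>j\<in>{1..m-1}. u j *\<^sub>R vd (X j) t))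
     + (\<Sum>j\<in>{1..m-1}. snd p j *\<^sub>R X j t)"

definition regular_point ::
  "(real \<Rightarrow> 'a::euclidean_space) \<Rightarrow> (nat \<Rightarrow> real \<Rightarrow> 'a) \<Rightarrow> nat \<Rightarrow> real \<Rightarrow> (nat \<Rightarrow> real) \<Rightarrow> bool" where
  "regular_point \<gamma> X m t u \<longleftrightarrow> inj_on (dsigma \<gamma> X m t u) (params m)"

abbreviation singular_point where
  "singular_point \<gamma> X m t u \<equiv> \<not> regular_point \<gamma> X m t u"

definition d2sigma ::
  "(real \<Rightarrow> 'a::euclidean_space) \<Rightarrow> (nat \<Rightarrow> real \<Rightarrow> 'a) \<Rightarrow> nat \<Rightarrow> real \<Rightarrow> (nat \<Rightarrow> real)
    \<Rightarrow> real \<times> (nat \<Rightarrow> real) \<Rightarrow> real \<times> (nat \<Rightarrow> real) \<Rightarrow> 'a" where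
  "d2sigma \<gamma> X m t u p q =
     (fst p * fst q) *\<^sub>R (vd (vd \<gamma>) t + (\<Sum>j\<in>{1..m-1}. u j *\<^sub>R vd (vd (X j)) t))
     + fst p *\<^sub>R (\<Sum>j\<in>{1..m-1}. snd q j *\<^sub>R vd (X j) t)
     + fst q *\<^sub>R (\<Sum>j\<in>{1..m-1}. snd p j *\<^sub>R vd (X j) t)"

definition normal_part :: "'a::euclidean_space set \<Rightarrow> 'a \<Rightarrow> 'a" where
  "normal_part W v = (THE w. w \<in> orthogonal_comp W \<and> v - w \<in> W)"

text \<open>Second fundamental form at a regular point (pulled back to parameters).\<close>
definition sff ::
  "(real \<Rightarrow> 'a::euclidean_space) \<Rightarrow> (nat \<Rightarrow> real \<Rightarrow> 'a) \<Rightarrow> nat \<Rightarrow> real \<Rightarrow> (nat \<Rightarrow> real)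
    \<Rightarrow> real \<times> (nat \<Rightarrow> real) \<Rightarrow> real \<times> (nat \<Rightarrow> real) \<Rightarrow> 'a" where
  "sff \<gamma> X m t u p q =
     normal_part (dsigma \<gamma> X m t u ` params m) (d2sigma \<gamma> X m t u p q)"

definition sff_kernel ::
  "(real \<Rightarrow> 'a::euclidean_space) \<Rightarrow> (nat \<Rightarrow> real \<Rightarrow> 'a) \<Rightarrow> nat \<Rightarrow> real \<Rightarrow> (nat \<Rightarrow> real) \<Rightarrow> 'a set" where
  "sff_kernel \<gamma> X m t u =
     dsigma \<gamma> X m t u ` {p \<in> params m. \<forall>q\<in>params m. sff \<gamma> X m t u p q = 0}"

definition rank_one ::
  "real set \<Rightarrow> (real \<Rightarrow> 'a::euclidean_space) \<Rightarrow> (nat \<Rightarrow> real \<Rightarrow> 'a) \<Rightarrow> nat \<Rightarrow> bool" where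
  "rank_one I \<gamma> X m \<longleftrightarrow>
     (\<forall>t\<in>I. \<forall>u. regular_point \<gamma> X m t u \<longrightarrow> dim (sff_kernel \<gamma> X m t u) = m - 1)"

definition rho :: "(nat \<Rightarrow> real \<Rightarrow> 'a::euclidean_space) \<Rightarrow> nat \<Rightarrow> nat \<Rightarrow> real \<Rightarrow> 'a" where
  "rho X m j t = normal_part (span {X i t | i. i \<in> {1..m-1}}) (vd (X j) t)"

text \<open>Degree of D at t: rank of sum c_j X_j(t) |-> sum c_j rho_t X_j(t).\<close>
definition ruling_degree :: "(nat \<Rightarrow> real \<Rightarrow> 'a::euclidean_space) \<Rightarrow> nat \<Rightarrow> real \<Rightarrow> nat" where
  "ruling_degree X m t =
     dim ((\<lambda>c. \<Sum>j\<in>{1..m-1}. c j *\<^sub>R rho X m j t) ` UNIV)"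

definition striction_f ::
  "(real \<Rightarrow> 'a::euclidean_space) \<Rightarrow> (nat \<Rightarrow> real \<Rightarrow> 'a) \<Rightarrow> nat \<Rightarrow> real \<Rightarrow> (nat \<Rightarrow> real) \<Rightarrow> real" where
  "striction_f \<gamma> X m t u =
     - ((vd \<gamma> t \<bullet> rho X m (m-1) t)
        + (\<Sum>i\<in>{1..m-2}. u i * (vd (X i) t \<bullet> rho X m (m-1) t)))
     / (norm (rho X m (m-1) t))\<^sup>2"

end

theory Submission
  imports Defs
begin

text \<open>Fix t and let D be the span of the rulings X_j(t). Degree one means that every
  rho_t X_j lies on the line spanned by rho = rho_t X_(m-1). The normal component of
  d sigma/dt (relative to D) lies on this line as well: otherwise sigma is regular at the point,
  and testing the second fundamental form against d/du^(m-1) and d/dt confines its kernel to a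
  hyperplane of D, contradicting rank one. The striction value f is exactly what makes
  d sigma/dt orthogonal to rho; being parallel to rho modulo D, it then lies in D, and the
  differential of sigma is not injective.\<close>

lemma normal_part_eqI:
  fixes W :: "'a::euclidean_space set"
  assumes "subspace W" "v - w \<in> W" "w \<in> W\<^sup>\<bottom>"
  shows "normal_part W v = w"
  unfolding normal_part_def
proof (rule the_equality)
  show "w \<in> W\<^sup>\<bottom> \<and> v - w \<in> W"
    using assms by blast
next
  fix w' assume w': "w' \<in> W\<^sup>\<bottom> \<and> v - w' \<in> W"
  have "w' - w \<in> W"
    using subspace_diff[OF assms(1,2), of "v - w'"] w' by simp
  moreover have "w' - w \<in> W\<^sup>\<bottom>"
    using subspace_diff[OF subspace_orthogonal_comp conjunct1[OF w'] assms(3)] .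
  ultimately have "w' - w = 0"
    using orthogonal_Int_0[OF assms(1)] by blast
  then show "w' = w"
    by simp
qed

lemma normal_part_decomp:
  fixes W :: "'a::euclidean_space set"
  assumes "subspace W"
  shows "normal_part W v \<in> W\<^sup>\<bottom>" "v - normal_part W v \<in> W"
proof -
  obtain a b where ab: "v = a + b" "a \<in> W" "b \<in> W\<^sup>\<bottom>"
    using subspace_sum_orthogonal_comp[OF assms] set_plus_elim by (metis UNIV_I)
  then have "normal_part W v = b"
    by (intro normal_part_eqI[OF assms]) simp_all
  with ab show "normal_part W v \<in> W\<^sup>\<bottom>" "v - normal_part W v \<in> W"
    by simp_all
qed

lemma normal_part_eq_0_iff:
  fixes W :: "'a::euclidean_space set"
  assumes "subspace W"
  shows "normal_part W v = 0 \<longleftrightarrow> v \<in> W"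
proof
  show "v \<in> W" if "normal_part W v = 0"
    using normal_part_decomp(2)[OF assms, of v] that by simp
  show "normal_part W v = 0" if "v \<in> W"
    using that subspace_0[OF subspace_orthogonal_comp] by (intro normal_part_eqI[OF assms]) simp_all
qed

lemma in_subspace_if_normal_part_parallel:
  fixes D :: "'a::euclidean_space set"
  assumes D: "subspace D" and r: "r \<in> D\<^sup>\<bottom>"
    and parallel: "normal_part D v \<in> span {r}" and orth: "v \<bullet> r = 0"
  shows "v \<in> D"
proof -
  obtain l where l: "normal_part D v = l *\<^sub>R r"
    using parallel by (auto simp: span_singleton)
  have "(v - normal_part D v) \<bullet> r = 0"
    using normal_part_decomp(2)[OF D] r by (auto simp: orthogonal_comp_def orthogonal_def)
  then have "l * (r \<bullet> r) = 0"
    using orth l by (simp add: inner_diff_left)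
  then have "normal_part D v = 0"
    using l by auto
  then show ?thesis
    using normal_part_eq_0_iff[OF D] by blast
qed

lemma parallel_part_eq_0:
  fixes D :: "'a::euclidean_space set"
  assumes D: "subspace D" and r: "r \<in> D\<^sup>\<bottom>" and not_parallel: "normal_part D w \<notin> span {r}"
    and y: "y \<in> span (insert w D)" "y - z \<in> D" and z: "z \<in> span {r}"
  shows "z = 0"
proof -
  define e where "e = normal_part D w"
  obtain k where k: "y - k *\<^sub>R w \<in> D"
    using y(1) by (auto simp: span_insert span_eq_iff[THEN iffD2, OF D])
  obtain l where l: "z = l *\<^sub>R r"
    using z by (auto simp: span_singleton)
  have "z - k *\<^sub>R e = (y - k *\<^sub>R w) - (y - z) + k *\<^sub>R (w - e)"
    by (simp add: algebra_simps)
  also have "\<dots> \<in> D"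
    using subspace_add[OF D subspace_diff[OF D k y(2)]
        subspace_scale[OF D normal_part_decomp(2)[OF D, of w]]]
    by (simp add: e_def)
  finally have "z - k *\<^sub>R e \<in> D" .
  moreover have "z - k *\<^sub>R e \<in> D\<^sup>\<bottom>"
    using subspace_diff[OF subspace_orthogonal_comp subspace_scale[OF subspace_orthogonal_comp r, of l]
        subspace_scale[OF subspace_orthogonal_comp normal_part_decomp(1)[OF D, of w], of k]]
    by (simp add: e_def l)
  ultimately have "z - k *\<^sub>R e \<in> D \<inter> D\<^sup>\<bottom>"
    by blast
  then have ze: "z = k *\<^sub>R e"
    using orthogonal_Int_0[OF D] by simp
  show "z = 0"
  proof (cases "k = 0")
    case False
    have "k *\<^sub>R e = l *\<^sub>R r"
      using ze l by simp
    then have "e = (l / k) *\<^sub>R r"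
      using False by (simp add: eq_vector_fraction_iff)
    then have "e \<in> span {r}"
      by (simp add: span_mul span_base)
    with not_parallel show ?thesis
      unfolding e_def by blast
  qed (simp add: ze)
qed

definition orthonormal_on :: "'i set \<Rightarrow> ('i \<Rightarrow> 'a::real_inner) \<Rightarrow> bool" where
  "orthonormal_on S x \<longleftrightarrow> (\<forall>i\<in>S. \<forall>j\<in>S. x i \<bullet> x j = (if i = j then 1 else 0))"

lemma inner_sum_orthonormal:
  assumes "orthonormal_on S x" "finite S" "k \<in> S"
  shows "(\<Sum>j\<in>S. c j *\<^sub>R x j) \<bullet> x k = c k"
proof -
  have "(\<Sum>j\<in>S. c j *\<^sub>R x j) \<bullet> x k = (\<Sum>j\<in>S. if j = k then c j else 0)"
    unfolding inner_sum_left using assms by (intro sum.cong) (auto simp: orthonormal_on_def)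
  also have "\<dots> = c k"
    using assms by simp
  finally show ?thesis .
qed

lemma orthonormal_expansion:
  assumes "orthonormal_on S x" "finite S" "v \<in> span (x ` S)"
  shows "v = (\<Sum>j\<in>S. (v \<bullet> x j) *\<^sub>R x j)"
proof -
  define r where "r = v - (\<Sum>j\<in>S. (v \<bullet> x j) *\<^sub>R x j)"
  have "r \<in> span (x ` S)"
    unfolding r_def by (intro span_diff[OF assms(3)] span_sum span_mul span_base) auto
  moreover have "orthogonal r (x i)" if "i \<in> S" for i
    by (simp add: r_def orthogonal_def inner_diff_left inner_sum_orthonormal[OF assms(1,2) that])
  ultimately have "orthogonal r r"
    using orthogonal_to_span by blast
  then show ?thesis
    by (simp add: r_def orthogonal_def)
qed

lemma in_span_if_dim_combinations_eq_1:
  fixes r :: "'i \<Rightarrow> 'a::euclidean_space"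
  assumes "dim (range (\<lambda>c. \<Sum>j\<in>S. c j *\<^sub>R r j)) = 1" "r k \<noteq> 0"
    and "finite S" "k \<in> S" "j \<in> S"
  shows "r j \<in> span {r k}"
proof -
  let ?R = "range (\<lambda>c. \<Sum>j\<in>S. c j *\<^sub>R r j)"
  have in_R: "r i \<in> ?R" if "i \<in> S" for i
  proof
    show "r i = (\<Sum>j\<in>S. (if j = i then 1 else 0) *\<^sub>R r j)"
      using that assms(3) by (simp add: if_distrib[where f="\<lambda>a. a *\<^sub>R _"] cong: if_cong)
  qed simp
  have "{r k} \<subseteq> ?R"
    using in_R[OF assms(4)] by simp
  moreover have "dim ?R \<le> dim {r k}"
    using assms(1,2) by (simp only: dim_singleton if_False order_refl)
  ultimately have "span {r k} = span ?R"
    by (rule dim_eq_span)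
  with span_base[OF in_R[OF assms(5)]] show ?thesis
    by simp
qed

lemma dim_orthonormal_kernel_less:
  fixes x r :: "'i \<Rightarrow> 'a::euclidean_space"
  assumes x: "orthonormal_on S x" and S: "finite S" "k \<in> S" and r: "r k \<noteq> 0"
  shows "dim {v \<in> span (x ` S). (\<Sum>j\<in>S. (v \<bullet> x j) *\<^sub>R r j) = 0} < card S"
    (is "dim ?H < _")
proof -
  have "subspace ?H"
    unfolding subspace_def
  proof (intro conjI ballI allI)
    fix v w assume "v \<in> ?H" "w \<in> ?H"
    then show "v + w \<in> ?H"
      by (simp add: span_add inner_add_left scaleR_add_left sum.distrib)
  next
    fix c :: real and v assume "v \<in> ?H"
    moreover have "(\<Sum>j\<in>S. ((c *\<^sub>R v) \<bullet> x j) *\<^sub>R r j) = c *\<^sub>R (\<Sum>j\<in>S. (v \<bullet> x j) *\<^sub>R r j)"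
      by (simp add: scaleR_sum_right)
    ultimately show "c *\<^sub>R v \<in> ?H"
      by (simp add: span_mul)
  qed (simp add: span_zero)
  moreover have "x k \<in> span (x ` S) - ?H"
  proof -
    have "(\<Sum>j\<in>S. (x k \<bullet> x j) *\<^sub>R r j) = r k"
      using x S by (simp add: orthonormal_on_def if_distrib[where f="\<lambda>a. a *\<^sub>R _"] cong: if_cong)
    then show ?thesis
      using S r by (simp add: span_base)
  qed
  ultimately have "span ?H \<subset> span (x ` S)"
    using span_eq_iff[THEN iffD2, of ?H] by blast
  then have "dim ?H < dim (x ` S)"
    by (rule dim_psubset)
  also have "\<dots> \<le> card S"
    using S by (meson card_image_le dim_le_card' finite_imageI le_trans)
  finally show ?thesis .
qed

definition ruling_space :: "(nat \<Rightarrow> real \<Rightarrow> 'a::euclidean_space) \<Rightarrow> nat \<Rightarrow> real \<Rightarrow> 'a set" where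
  "ruling_space X m t = span ((\<lambda>j. X j t) ` {1..m-1})"

definition sigma_velocity ::
  "(real \<Rightarrow> 'a::euclidean_space) \<Rightarrow> (nat \<Rightarrow> real \<Rightarrow> 'a) \<Rightarrow> nat \<Rightarrow> real \<Rightarrow> (nat \<Rightarrow> real) \<Rightarrow> 'a" where
  "sigma_velocity \<gamma> X m t u = vd \<gamma> t + (\<Sum>j\<in>{1..m-1}. u j *\<^sub>R vd (X j) t)"

lemma rho_eq_normal_part: "rho X m j t = normal_part (ruling_space X m t) (vd (X j) t)"
  by (simp only: rho_def ruling_space_def Setcompr_eq_image)

lemma dsigma_eq:
  "dsigma \<gamma> X m t u p = fst p *\<^sub>R sigma_velocity \<gamma> X m t u + (\<Sum>j\<in>{1..m-1}. snd p j *\<^sub>R X j t)"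
  by (simp add: dsigma_def sigma_velocity_def)

lemma subspace_ruling_space: "subspace (ruling_space X m t)"
  by (simp add: ruling_space_def)

lemma sum_in_ruling_space: "(\<Sum>j\<in>{1..m-1}. c j *\<^sub>R X j t) \<in> ruling_space X m t"
  unfolding ruling_space_def by (intro span_sum span_mul span_base) auto

lemma rho_in_orthogonal_comp: "rho X m j t \<in> (ruling_space X m t)\<^sup>\<bottom>"
  by (simp add: rho_eq_normal_part normal_part_decomp subspace_ruling_space)

lemma vd_minus_rho_in_ruling_space: "vd (X j) t - rho X m j t \<in> ruling_space X m t"
  by (simp add: rho_eq_normal_part normal_part_decomp subspace_ruling_space)

lemma inner_vd_rho: "vd (X j) t \<bullet> rho X m j t = (norm (rho X m j t))\<^sup>2"
proof -
  have "(vd (X j) t - rho X m j t) \<bullet> rho X m j t = 0"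
    using rho_in_orthogonal_comp[of X m j t] vd_minus_rho_in_ruling_space[of X j t m]
    unfolding orthogonal_comp_def orthogonal_def by blast
  then show ?thesis
    by (simp add: inner_diff_left power2_norm_eq_inner)
qed

lemma ruling_space_expansion:
  assumes "orthonormal_on {1..m-1} (\<lambda>j. X j t)" "v \<in> ruling_space X m t"
  shows "v = (\<Sum>j\<in>{1..m-1}. (v \<bullet> X j t) *\<^sub>R X j t)"
  using orthonormal_expansion[OF assms(1)] assms(2) by (simp add: ruling_space_def)

lemma tangent_space_eq:
  assumes frame: "orthonormal_on {1..m-1} (\<lambda>j. X j t)"
  shows "dsigma \<gamma> X m t u ` params m
    = span (insert (sigma_velocity \<gamma> X m t u) (ruling_space X m t))"
    (is "?W = span (insert ?w ?D)")
proof -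
  have "span (insert ?w ?D) = {x. \<exists>k. x - k *\<^sub>R ?w \<in> ?D}"
    by (simp add: span_insert ruling_space_def span_span)
  moreover have "?W = {x. \<exists>k. x - k *\<^sub>R ?w \<in> ?D}"
  proof (intro equalityI subsetI)
    fix x assume "x \<in> ?W"
    then obtain p where "x = dsigma \<gamma> X m t u p"
      by blast
    then have "x - fst p *\<^sub>R ?w \<in> ?D"
      using sum_in_ruling_space[of "snd p"] by (simp add: dsigma_eq)
    then show "x \<in> {x. \<exists>k. x - k *\<^sub>R ?w \<in> ?D}"
      by blast
  next
    fix x assume "x \<in> {x. \<exists>k. x - k *\<^sub>R ?w \<in> ?D}"
    then obtain k where k: "x - k *\<^sub>R ?w \<in> ?D"
      by blast
    define c where "c j = (if j \<in> {1..m-1} then (x - k *\<^sub>R ?w) \<bullet> X j t else 0)" for j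
    have "(k, c) \<in> params m"
      by (simp add: params_def c_def)
    moreover have "dsigma \<gamma> X m t u (k, c) = x"
      using ruling_space_expansion[OF frame k] by (simp add: dsigma_eq c_def)
    ultimately show "x \<in> ?W"
      by (metis image_eqI)
  qed
  ultimately show ?thesis
    by simp
qed

lemma singular_point_if_velocity_in_ruling_space:
  assumes frame: "orthonormal_on {1..m-1} (\<lambda>j. X j t)"
    and w: "sigma_velocity \<gamma> X m t u \<in> ruling_space X m t"
  shows "singular_point \<gamma> X m t u"
proof
  assume regular: "regular_point \<gamma> X m t u"
  define c where "c j = (if j \<in> {1..m-1} then - (sigma_velocity \<gamma> X m t u \<bullet> X j t) else 0)" for j
  have "dsigma \<gamma> X m t u (1, c) = dsigma \<gamma> X m t u (0, \<lambda>_. 0)"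
    using ruling_space_expansion[OF frame w] by (simp add: dsigma_eq c_def sum_negf)
  moreover have "(1, c) \<in> params m" "(0, \<lambda>_. 0) \<in> params m"
    by (simp_all add: params_def c_def)
  ultimately have "(1::real, c) = (0, \<lambda>_. 0)"
    by (rule inj_onD[OF regular[unfolded regular_point_def]])
  then show False
    by simp
qed

lemma regular_point_if_velocity_notin_ruling_space:
  assumes frame: "orthonormal_on {1..m-1} (\<lambda>j. X j t)"
    and w: "sigma_velocity \<gamma> X m t u \<notin> ruling_space X m t"
  shows "regular_point \<gamma> X m t u"
  unfolding regular_point_def inj_on_def
proof (intro ballI impI)
  let ?w = "sigma_velocity \<gamma> X m t u" and ?D = "ruling_space X m t"
  fix p q assume p: "p \<in> params m" and q: "q \<in> params m"
    and eq: "dsigma \<gamma> X m t u p = dsigma \<gamma> X m t u q"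
  define a where "a = fst p - fst q"
  define c where "c j = snd p j - snd q j" for j
  have lin: "a *\<^sub>R ?w = - (\<Sum>j\<in>{1..m-1}. c j *\<^sub>R X j t)"
    using eq by (simp add: dsigma_eq a_def c_def algebra_simps sum_subtractf)
  have a: "a = 0"
  proof (rule ccontr)
    assume "a \<noteq> 0"
    have "a *\<^sub>R ?w \<in> ?D"
      unfolding lin by (intro subspace_neg subspace_ruling_space sum_in_ruling_space)
    then have "(1 / a) *\<^sub>R (a *\<^sub>R ?w) \<in> ?D"
      by (rule subspace_scale[OF subspace_ruling_space])
    with \<open>a \<noteq> 0\<close> w show False
      by simp
  qed
  have "c j = 0" if "j \<in> {1..m-1}" for j
    using lin a inner_sum_orthonormal[OF frame _ that, of c] by simp
  then have "snd p j = snd q j" for j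
    using p q by (cases "j \<in> {1..m-1}") (auto simp: params_def c_def)
  then have "snd p = snd q"
    by blast
  with a show "p = q"
    by (simp add: a_def prod_eq_iff)
qed

lemma sff_eq_0_iff:
  assumes frame: "orthonormal_on {1..m-1} (\<lambda>j. X j t)"
  shows "sff \<gamma> X m t u p q = 0 \<longleftrightarrow> d2sigma \<gamma> X m t u p q \<in> dsigma \<gamma> X m t u ` params m"
proof -
  have "subspace (dsigma \<gamma> X m t u ` params m)"
    unfolding tangent_space_eq[where X=X and t=t, OF frame] by (rule subspace_span)
  then show ?thesis
    by (simp add: sff_def normal_part_eq_0_iff)
qed

lemma d2sigma_ruling_direction:
  assumes "k \<in> {1..m-1}"
  shows "d2sigma \<gamma> X m t u p (0, \<lambda>j. if j = k then 1 else 0) = fst p *\<^sub>R vd (X k) t"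
  using assms by (simp add: d2sigma_def if_distrib[where f="\<lambda>a. a *\<^sub>R _"] cong: if_cong)

lemma d2sigma_time_direction:
  "d2sigma \<gamma> X m t u (0, c) (1, \<lambda>_. 0) = (\<Sum>j\<in>{1..m-1}. c j *\<^sub>R vd (X j) t)"
  by (simp add: d2sigma_def)

lemma sff_kernel_subset:
  fixes \<gamma> :: "real \<Rightarrow> 'a::euclidean_space"
  assumes frame: "orthonormal_on {1..m-1} (\<lambda>j. X j t)"
    and k: "k \<in> {1..m-1}" and rho_k: "rho X m k t \<noteq> 0"
    and parallel: "\<forall>j\<in>{1..m-1}. rho X m j t \<in> span {rho X m k t}"
    and not_parallel:
      "normal_part (ruling_space X m t) (sigma_velocity \<gamma> X m t u) \<notin> span {rho X m k t}"
  shows "sff_kernel \<gamma> X m t u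
    \<subseteq> {x \<in> ruling_space X m t. (\<Sum>j\<in>{1..m-1}. (x \<bullet> X j t) *\<^sub>R rho X m j t) = 0}"
proof
  let ?D = "ruling_space X m t" and ?W = "dsigma \<gamma> X m t u ` params m"
  have W: "?W = span (insert (sigma_velocity \<gamma> X m t u) ?D)"
    using frame by (rule tangent_space_eq)
  have no_parallel_part: "z = 0" if "y \<in> ?W" "y - z \<in> ?D" "z \<in> span {rho X m k t}" for y z
    using parallel_part_eq_0[OF subspace_ruling_space rho_in_orthogonal_comp not_parallel] that W
    by simp
  fix x assume "x \<in> sff_kernel \<gamma> X m t u"
  then obtain a c where x: "x = dsigma \<gamma> X m t u (a, c)"
    and kernel: "\<forall>q\<in>params m. sff \<gamma> X m t u (a, c) q = 0"
    unfolding sff_kernel_def by auto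
  have in_W: "d2sigma \<gamma> X m t u (a, c) q \<in> ?W" if "q \<in> params m" for q
    using kernel that sff_eq_0_iff[where X=X and t=t, OF frame] by blast
  have "a *\<^sub>R rho X m k t = 0"
  proof (rule no_parallel_part)
    show "a *\<^sub>R vd (X k) t \<in> ?W"
      using in_W[of "(0, \<lambda>j. if j = k then 1 else 0)"] k
      by (simp add: params_def d2sigma_ruling_direction)
    show "a *\<^sub>R vd (X k) t - a *\<^sub>R rho X m k t \<in> ?D"
      using subspace_scale[OF subspace_ruling_space vd_minus_rho_in_ruling_space, of a]
      by (simp add: scaleR_diff_right)
    show "a *\<^sub>R rho X m k t \<in> span {rho X m k t}"
      by (simp add: span_mul span_base)
  qed
  with rho_k have a: "a = 0"
    by simp
  have "(\<Sum>j\<in>{1..m-1}. c j *\<^sub>R rho X m j t) = 0"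
  proof (rule no_parallel_part)
    show "(\<Sum>j\<in>{1..m-1}. c j *\<^sub>R vd (X j) t) \<in> ?W"
      using in_W[of "(1, \<lambda>_. 0)"] a by (simp add: params_def d2sigma_time_direction)
    have "(\<Sum>j\<in>{1..m-1}. c j *\<^sub>R (vd (X j) t - rho X m j t)) \<in> ?D"
      by (intro subspace_sum subspace_scale subspace_ruling_space vd_minus_rho_in_ruling_space)
    then show "(\<Sum>j\<in>{1..m-1}. c j *\<^sub>R vd (X j) t) - (\<Sum>j\<in>{1..m-1}. c j *\<^sub>R rho X m j t) \<in> ?D"
      by (simp add: scaleR_diff_right sum_subtractf)
    show "(\<Sum>j\<in>{1..m-1}. c j *\<^sub>R rho X m j t) \<in> span {rho X m k t}"
      using parallel by (intro span_sum span_mul) auto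
  qed
  moreover have x_eq: "x = (\<Sum>j\<in>{1..m-1}. c j *\<^sub>R X j t)"
    using x a by (simp add: dsigma_eq)
  moreover have "(\<Sum>j\<in>{1..m-1}. (x \<bullet> X j t) *\<^sub>R rho X m j t) = (\<Sum>j\<in>{1..m-1}. c j *\<^sub>R rho X m j t)"
  proof (rule sum.cong[OF refl])
    fix j assume "j \<in> {1..m-1}"
    then show "(x \<bullet> X j t) *\<^sub>R rho X m j t = c j *\<^sub>R rho X m j t"
      using inner_sum_orthonormal[OF frame _ \<open>j \<in> {1..m-1}\<close>, of c] by (simp add: x_eq)
  qed
  ultimately show "x \<in> {x \<in> ?D. (\<Sum>j\<in>{1..m-1}. (x \<bullet> X j t) *\<^sub>R rho X m j t) = 0}"
    using sum_in_ruling_space[of c] by simp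
qed

lemma normal_velocity_parallel_to_rho:
  fixes \<gamma> :: "real \<Rightarrow> 'a::euclidean_space"
  assumes rank_one: "rank_one I \<gamma> X m" and t: "t \<in> I"
    and degree: "ruling_degree X m t = 1"
    and frame: "orthonormal_on {1..m-1} (\<lambda>j. X j t)"
    and k: "k \<in> {1..m-1}" and rho_k: "rho X m k t \<noteq> 0"
  shows "normal_part (ruling_space X m t) (sigma_velocity \<gamma> X m t u) \<in> span {rho X m k t}"
proof (rule ccontr)
  assume not_parallel:
    "normal_part (ruling_space X m t) (sigma_velocity \<gamma> X m t u) \<notin> span {rho X m k t}"
  let ?H = "{x \<in> ruling_space X m t. (\<Sum>j\<in>{1..m-1}. (x \<bullet> X j t) *\<^sub>R rho X m j t) = 0}"
  have parallel: "\<forall>j\<in>{1..m-1}. rho X m j t \<in> span {rho X m k t}"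
    using in_span_if_dim_combinations_eq_1[where S="{1..m-1}" and r="\<lambda>j. rho X m j t"]
      degree rho_k k
    unfolding ruling_degree_def by simp
  have "normal_part (ruling_space X m t) (sigma_velocity \<gamma> X m t u) \<noteq> 0"
    using not_parallel span_zero by metis
  then have "sigma_velocity \<gamma> X m t u \<notin> ruling_space X m t"
    using normal_part_eq_0_iff[OF subspace_ruling_space] by blast
  with frame have "regular_point \<gamma> X m t u"
    by (rule regular_point_if_velocity_notin_ruling_space)
  then have "dim (sff_kernel \<gamma> X m t u) = m - 1"
    using rank_one t by (simp add: rank_one_def)
  moreover have "dim (sff_kernel \<gamma> X m t u) \<le> dim ?H"
    using sff_kernel_subset[OF frame k rho_k parallel not_parallel] by (rule dim_subset)
  moreover have "dim ?H < m - 1"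
    using dim_orthonormal_kernel_less[OF frame _ k, of "\<lambda>j. rho X m j t"] rho_k
    by (simp add: ruling_space_def)
  ultimately show False
    by simp
qed

lemma striction_velocity_orthogonal_rho:
  assumes m: "m \<ge> 2" and rho: "rho X m (m-1) t \<noteq> 0"
  shows "sigma_velocity \<gamma> X m t (u(m-1 := striction_f \<gamma> X m t u)) \<bullet> rho X m (m-1) t = 0"
proof -
  let ?r = "rho X m (m-1) t" and ?f = "striction_f \<gamma> X m t u"
  let ?A = "vd \<gamma> t \<bullet> ?r + (\<Sum>i\<in>{1..m-2}. u i * (vd (X i) t \<bullet> ?r))"
  have split: "{1..m-1} = insert (m-1) {1..m-2}" "m-1 \<notin> {1..m-2}"
    using m by auto
  have "(\<Sum>i\<in>{1..m-2}. (u(m-1 := ?f)) i * (vd (X i) t \<bullet> ?r))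
      = (\<Sum>i\<in>{1..m-2}. u i * (vd (X i) t \<bullet> ?r))"
    using split(2) by (intro sum.cong refl) auto
  then have "sigma_velocity \<gamma> X m t (u(m-1 := ?f)) \<bullet> ?r = ?A + ?f * (norm ?r)\<^sup>2"
    unfolding sigma_velocity_def split(1) using split(2)
    by (simp add: inner_add_left inner_sum_left inner_vd_rho)
  also have "\<dots> = 0"
    using rho by (simp add: striction_f_def)
  finally show ?thesis .
qed

theorem mainTheorem7:
  fixes I :: "real set" and \<gamma> :: "real \<Rightarrow> 'a::euclidean_space"
    and X :: "nat \<Rightarrow> real \<Rightarrow> 'a" and m n :: nat
  assumes dimension: "DIM('a) = m + n"
    and m2: "m \<ge> 2"
    and I: "open I" "is_interval I" "I \<noteq> {}"
    and gamma_smooth: "smooth_curve_on I \<gamma>"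
    and unit_speed: "\<forall>t\<in>I. norm (vd \<gamma> t) = 1"
    and X_smooth: "\<forall>j\<in>{1..m-1}. smooth_curve_on I (X j)"
    and orthonormal: "\<forall>t\<in>I. \<forall>i\<in>{1..m-1}. \<forall>j\<in>{1..m-1}.
                         X i t \<bullet> X j t = (if i = j then 1 else 0)"
    and rank1: "rank_one I \<gamma> X m"
    and degree1: "\<forall>t\<in>I. ruling_degree X m t = 1"
    and rho_nz: "\<forall>t\<in>I. rho X m (m-1) t \<noteq> 0"
  shows "\<forall>t\<in>I. \<forall>u. singular_point \<gamma> X m t (u(m-1 := striction_f \<gamma> X m t u))"
proof (intro ballI allI)
  fix t u assume t: "t \<in> I"
  let ?u' = "u(m-1 := striction_f \<gamma> X m t u)"
  have frame: "orthonormal_on {1..m-1} (\<lambda>j. X j t)"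
    using orthonormal t by (simp add: orthonormal_on_def)
  have k: "m - 1 \<in> {1..m-1}"
    using m2 by simp
  have "sigma_velocity \<gamma> X m t ?u' \<in> ruling_space X m t"
  proof (rule in_subspace_if_normal_part_parallel[OF subspace_ruling_space rho_in_orthogonal_comp])
    show "normal_part (ruling_space X m t) (sigma_velocity \<gamma> X m t ?u') \<in> span {rho X m (m-1) t}"
      using rank1 t degree1 frame k rho_nz by (intro normal_velocity_parallel_to_rho) auto
    show "sigma_velocity \<gamma> X m t ?u' \<bullet> rho X m (m-1) t = 0"
      using m2 rho_nz t by (intro striction_velocity_orthogonal_rho) auto
  qed
  with frame show "singular_point \<gamma> X m t ?u'"
    by (rule singular_point_if_velocity_in_ruling_space)
qed

end
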